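(* Let $B,B'$ be sets of vincular patterns, $p\in S_k$ and $R\subseteq[k]$. If $R$ is reversibly deletable for $p$ with respect to $B$ and also with respect to $B'$, then $R$ is reversibly deletable for $p$ with respect to $B\cup B'$.
   Context: A vincular pattern $(\sigma,X)$, $\sigma\in S_\ell$, $X\subseteq[\ell-1]$, is contained in $\pi$ if some subsequence $\pi_{i_1}\cdots\pi_{i_\ell}$ ($i_1<\dots<i_\ell$) is order-isomorphic to $\sigma$ with $i_{x+1}=i_x+1$ for $x\in X$. For $p\in S_k$ and $w\in[n]^k$ with distinct letters order-isomorphic to $p$, $S_n^B(p;w)$ is the set of $B$-avoiding $\pi\in S_n$ with $\pi_i=w_i$ ($i\le k$). $d_R(\pi)$ deletes the entries of $\pi$ in positions in $R$ and reduces to a permutation; for words $d_R(w)$ deletes $w_r$ ($r\in R$) and subtracts from each remaining $w_i$ the number of $r\in R$ with $w_r<w_i$. $R$ is reversibly deletable for $p$ w.r.t. $B$ if for every $n$ and every such $w$ with $S_n^B(p;w)\ne\emptyset$, $d_R$ restricts to a bijection $S_n^B(p;w)\to S_{n-|R|}^B(d_R(p);d_R(w))$. *)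

theory Defs
  imports Main
begin

text \<open>Permutations of [n] and words are lists; values are 1-based (a permutation
of [n] is a list with distinct entries forming {1..n}); list position i (0-based)
corresponds to position i+1 of the paper.\<close>

definition perm_of :: "nat \<Rightarrow> nat list \<Rightarrow> bool" where
  "perm_of n \<pi> \<longleftrightarrow> distinct \<pi> \<and> set \<pi> = {1..n}"

definition order_iso :: "nat list \<Rightarrow> nat list \<Rightarrow> bool" where
  "order_iso u v \<longleftrightarrow> length u = length v \<and>
     (\<forall>i<length u. \<forall>j<length u. (u!i < u!j) = (v!i < v!j))"

type_synonym vpattern = "nat list \<times> nat set"

definition vincular :: "vpattern \<Rightarrow> bool" where
  "vincular P \<longleftrightarrow> perm_of (length (fst P)) (fst P) \<and> snd P \<subseteq> {1..<length (fst P)}"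

text \<open>Containment: indices idx (0-based, strictly increasing) with the subsequence
order-isomorphic to sigma and i_{x+1} = i_x + 1 for x in X (1-based x).\<close>
definition contains :: "nat list \<Rightarrow> vpattern \<Rightarrow> bool" where
  "contains \<pi> P \<longleftrightarrow> (\<exists>idx. length idx = length (fst P) \<and> sorted_wrt (<) idx \<and>
      (\<forall>i\<in>set idx. i < length \<pi>) \<and>
      order_iso (map (\<lambda>i. \<pi>!i) idx) (fst P) \<and>
      (\<forall>x\<in>snd P. 1 \<le> x \<longrightarrow> x < length (fst P) \<longrightarrow> idx!x = idx!(x-1) + 1))"

definition avoids :: "nat list \<Rightarrow> vpattern set \<Rightarrow> bool" where
  "avoids \<pi> B \<longleftrightarrow> (\<forall>P\<in>B. \<not> contains \<pi> P)"

definition Sset :: "nat \<Rightarrow> vpattern set \<Rightarrow> nat list \<Rightarrow> nat list \<Rightarrow> nat list set" where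
  "Sset n B p w = {\<pi>. perm_of n \<pi> \<and> avoids \<pi> B \<and> (\<forall>i<length p. \<pi>!i = w!i)}"

definition adm_word :: "nat \<Rightarrow> nat list \<Rightarrow> nat list \<Rightarrow> bool" where
  "adm_word n p w \<longleftrightarrow> length w = length p \<and> set w \<subseteq> {1..n} \<and> distinct w \<and> order_iso w p"

text \<open>For permutations this is deletion followed by reduction.\<close>
definition dR :: "nat set \<Rightarrow> nat list \<Rightarrow> nat list" where
  "dR R w = map (\<lambda>i. w!i - card {r \<in> R. 1 \<le> r \<and> r \<le> length w \<and> w!(r-1) < w!i})
              (filter (\<lambda>i. Suc i \<notin> R) [0..<length w])"

definition rev_deletable :: "nat set \<Rightarrow> nat list \<Rightarrow> vpattern set \<Rightarrow> bool" where
  "rev_deletable R p B \<longleftrightarrow> (\<forall>n w. adm_word n p w \<and> Sset n B p w \<noteq> {} \<longrightarrow>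
      bij_betw (dR R) (Sset n B p w) (Sset (n - card R) B (dR R p) (dR R w)))"

end

theory Submission
  imports Defs
begin

(* Avoiding B \<union> B' means avoiding both B and B', so
   S_n^{B\<union>B'}(p;w) = S_n^B(p;w) \<inter> S_n^{B'}(p;w), and likewise after deletion.
   A map that is a bijection A \<rightarrow> C and A' \<rightarrow> C' restricts to a bijection
   A \<inter> A' \<rightarrow> C \<inter> C' as soon as it is injective on A \<union> A' (the two preimages
   of a common image point must then coincide).  So the theorem reduces to:
   d_R is injective on all permutations sharing the prefix w.
   This holds because such permutations delete the same set D of values, and
   on kept entries d_R acts as the reduction x \<mapsto> x - #{d \<in> D. d < x},
   which is injective off D. *)

text \<open>Lowering each value outside D by the number of elements of D below it is
  injective: it equals the number of non-elements of D below the value, which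
  strictly increases when passing a value outside D.\<close>

lemma reduction_inj_on_compl:
  fixes D :: "nat set"
  shows "inj_on (\<lambda>x. x - card {d\<in>D. d < x}) (- D)"
proof -
  have count: "x - card {d\<in>D. d < x} = card ({..<x} - D)" for x
  proof -
    have "{d\<in>D. d < x} = {..<x} \<inter> D" by auto
    moreover have "card ({..<x} - D) = card {..<x} - card ({..<x} \<inter> D)"
      by (rule card_Diff_subset_Int) simp
    ultimately show ?thesis by simp
  qed
  have mono: "card ({..<a} - D) < card ({..<b} - D)" if "a < b" "a \<notin> D" for a b
    by (rule psubset_card_mono) (use that in auto)
  show ?thesis
  proof (rule inj_onI)
    fix x y assume "x \<in> - D" "y \<in> - D"
      and "x - card {d\<in>D. d < x} = y - card {d\<in>D. d < y}"
    then show "x = y" using mono[of x y] mono[of y x] unfolding count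
      by (cases x y rule: linorder_cases) auto
  qed
qed

definition deleted_values :: "nat set \<Rightarrow> nat list \<Rightarrow> nat set" where
  "deleted_values R \<rho> = (\<lambda>r. \<rho>!(r-1)) ` R"

lemma deleted_values_cong:
  assumes "\<forall>r\<in>R. \<rho>!(r-1) = \<rho>'!(r-1)"
  shows "deleted_values R \<rho> = deleted_values R \<rho>'"
  using assms unfolding deleted_values_def by (intro image_cong) auto

lemma dR_count_eq_deleted_below:
  assumes dist: "distinct \<rho>" and R: "R \<subseteq> {1..length \<rho>}"
  shows "card {r\<in>R. 1 \<le> r \<and> r \<le> length \<rho> \<and> \<rho>!(r-1) < v}
       = card {d \<in> deleted_values R \<rho>. d < v}"
proof -
  let ?val = "\<lambda>r. \<rho>!(r-1)"
  have inj: "inj_on ?val R"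
  proof (rule inj_onI)
    fix r r' assume "r \<in> R" "r' \<in> R" "?val r = ?val r'"
    moreover have "r \<in> {1..length \<rho>}" "r' \<in> {1..length \<rho>}"
      using \<open>r \<in> R\<close> \<open>r' \<in> R\<close> R by blast+
    then have "r - 1 < length \<rho>" "r' - 1 < length \<rho>" "1 \<le> r" "1 \<le> r'" by auto
    ultimately show "r = r'" using dist nth_eq_iff_index_eq by fastforce
  qed
  have "{r\<in>R. 1 \<le> r \<and> r \<le> length \<rho> \<and> ?val r < v} = {r\<in>R. ?val r < v}"
    using R by auto
  moreover have "{d \<in> deleted_values R \<rho>. d < v} = ?val ` {r\<in>R. ?val r < v}"
    unfolding deleted_values_def by auto
  ultimately show ?thesis
    using card_image[OF inj_on_subset[OF inj]] by simp
qed

lemma kept_entry_not_deleted: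
  assumes dist: "distinct \<rho>" and R: "R \<subseteq> {1..length \<rho>}"
    and i: "i < length \<rho>" "Suc i \<notin> R"
  shows "\<rho>!i \<notin> deleted_values R \<rho>"
proof
  assume "\<rho>!i \<in> deleted_values R \<rho>"
  then obtain r where r: "r \<in> R" "\<rho>!i = \<rho>!(r-1)" unfolding deleted_values_def by auto
  from r R have "r \<in> {1..length \<rho>}" by blast
  then have "r - 1 < length \<rho>" "1 \<le> r" by auto
  with r i dist have "i = r - 1" using nth_eq_iff_index_eq by metis
  with \<open>1 \<le> r\<close> r i show False by (simp add: Suc_diff_1)
qed

text \<open>d_R is injective on lists with distinct entries that agree at the
  deleted positions: both delete the same values, and the kept entries are
  recovered by the injective reduction.\<close>

lemma dR_inj_same_deleted:
  assumes dist: "distinct \<rho>" "distinct \<rho>'" and len: "length \<rho>' = length \<rho>"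
    and R: "R \<subseteq> {1..length \<rho>}"
    and agree: "\<forall>r\<in>R. \<rho>!(r-1) = \<rho>'!(r-1)"
    and eq: "dR R \<rho> = dR R \<rho>'"
  shows "\<rho> = \<rho>'"
proof (rule nth_equalityI)
  show "length \<rho> = length \<rho>'" using len by simp
  fix i assume i: "i < length \<rho>"
  define D where "D = deleted_values R \<rho>"
  have D': "D = deleted_values R \<rho>'" unfolding D_def by (rule deleted_values_cong[OF agree])
  show "\<rho>!i = \<rho>'!i"
  proof (cases "Suc i \<in> R")
    case True
    then show ?thesis using agree by fastforce
  next
    case False
    have "\<rho>!i - card {r\<in>R. 1 \<le> r \<and> r \<le> length \<rho> \<and> \<rho>!(r-1) < \<rho>!i}
        = \<rho>'!i - card {r\<in>R. 1 \<le> r \<and> r \<le> length \<rho>' \<and> \<rho>'!(r-1) < \<rho>'!i}"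
      using eq i False len unfolding dR_def map_eq_conv by auto
    moreover have "card {r\<in>R. 1 \<le> r \<and> r \<le> length \<rho> \<and> \<rho>!(r-1) < v}
        = card {d\<in>D. d < v}" for v
      unfolding D_def by (rule dR_count_eq_deleted_below[OF dist(1) R])
    moreover have "card {r\<in>R. 1 \<le> r \<and> r \<le> length \<rho>' \<and> \<rho>'!(r-1) < v}
        = card {d\<in>D. d < v}" for v
      unfolding D' by (rule dR_count_eq_deleted_below[OF dist(2)]) (use R len in simp)
    ultimately have "\<rho>!i - card {d\<in>D. d < \<rho>!i} = \<rho>'!i - card {d\<in>D. d < \<rho>'!i}"
      by simp
    moreover have "\<rho>!i \<in> - D"
      unfolding D_def using kept_entry_not_deleted[OF dist(1) R i False] by simp
    moreover have "\<rho>'!i \<in> - D"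
      unfolding D' using kept_entry_not_deleted[OF dist(2) _ _ False] R i len by simp
    ultimately show ?thesis by (rule inj_onD[OF reduction_inj_on_compl])
  qed
qed

lemma bij_betw_Int:
  assumes bij: "bij_betw f A C" and bij': "bij_betw f A' C'" and inj: "inj_on f (A \<union> A')"
  shows "bij_betw f (A \<inter> A') (C \<inter> C')"
proof (rule bij_betw_imageI)
  have onto: "f ` A = C" "f ` A' = C'"
    using bij bij' by (simp_all add: bij_betw_def)
  show "inj_on f (A \<inter> A')" using inj by (rule inj_on_subset) blast
  show "f ` (A \<inter> A') = C \<inter> C'"
  proof
    show "f ` (A \<inter> A') \<subseteq> C \<inter> C'" using onto by auto
    show "C \<inter> C' \<subseteq> f ` (A \<inter> A')"
    proof
      fix y assume "y \<in> C \<inter> C'"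
      then obtain x x' where x: "x \<in> A" "f x = y" and x': "x' \<in> A'" "f x' = y"
        unfolding onto[symmetric] by auto
      then have "x = x'" using inj_onD[OF inj, of x x'] by simp
      with x x' show "y \<in> f ` (A \<inter> A')" by blast
    qed
  qed
qed

lemma Sset_Un: "Sset n (B \<union> B') p w = Sset n B p w \<inter> Sset n B' p w"
  unfolding Sset_def avoids_def by auto

lemma perm_of_length: "perm_of n \<pi> \<Longrightarrow> length \<pi> = n"
  unfolding perm_of_def by (metis card_atLeastAtMost diff_Suc_1 distinct_card)

lemma adm_word_length_le: "adm_word n p w \<Longrightarrow> length p \<le> n"
  unfolding adm_word_def
  by (metis card_atLeastAtMost card_mono diff_Suc_1 distinct_card finite_atLeastAtMost)

lemma dR_inj_on_prefix_class:
  assumes R: "R \<subseteq> {1..length p}" and adm: "adm_word n p w"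
  shows "inj_on (dR R) (Sset n B p w \<union> Sset n B' p w)"
proof (rule inj_onI)
  fix \<pi> \<pi>' assume "\<pi> \<in> Sset n B p w \<union> Sset n B' p w" "\<pi>' \<in> Sset n B p w \<union> Sset n B' p w"
  then have perm: "perm_of n \<pi>" "perm_of n \<pi>'"
    and prefix: "\<forall>i<length p. \<pi>!i = w!i" "\<forall>i<length p. \<pi>'!i = w!i"
    unfolding Sset_def by auto
  have len: "length \<pi> = n" "length \<pi>' = n" using perm by (auto dest: perm_of_length)
  have R': "R \<subseteq> {1..length \<pi>}" using R adm_word_length_le[OF adm] len by auto
  have "\<forall>r\<in>R. \<pi>!(r-1) = \<pi>'!(r-1)" using R prefix by fastforce
  moreover assume "dR R \<pi> = dR R \<pi>'"
  ultimately show "\<pi> = \<pi>'"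
    using dR_inj_same_deleted[OF _ _ _ R'] perm len unfolding perm_of_def by auto
qed

theorem mainTheorem9:
  fixes B B' :: "vpattern set" and p :: "nat list" and R :: "nat set"
  assumes "\<forall>P\<in>B. vincular P" and "\<forall>P\<in>B'. vincular P"
    and "perm_of (length p) p" and "R \<subseteq> {1..length p}"
    and "rev_deletable R p B" and "rev_deletable R p B'"
  shows "rev_deletable R p (B \<union> B')"
  unfolding rev_deletable_def
proof (intro allI impI)
  fix n w assume nw: "adm_word n p w \<and> Sset n (B \<union> B') p w \<noteq> {}"
  then have nonempty: "Sset n B p w \<noteq> {}" "Sset n B' p w \<noteq> {}"
    unfolding Sset_Un by auto
  have "bij_betw (dR R) (Sset n B p w) (Sset (n - card R) B (dR R p) (dR R w))"
    using assms(5) nw nonempty unfolding rev_deletable_def by blast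
  moreover have "bij_betw (dR R) (Sset n B' p w) (Sset (n - card R) B' (dR R p) (dR R w))"
    using assms(6) nw nonempty unfolding rev_deletable_def by blast
  moreover have "inj_on (dR R) (Sset n B p w \<union> Sset n B' p w)"
    using dR_inj_on_prefix_class assms(4) nw by blast
  ultimately show "bij_betw (dR R) (Sset n (B \<union> B') p w)
      (Sset (n - card R) (B \<union> B') (dR R p) (dR R w))"
    unfolding Sset_Un by (rule bij_betw_Int)
qed

end
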